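(* Consider Algorithm PDFPM (described in the context), and let $\bar{x}^k$ be the point computed in Step 2 at some iteration $k$ with current parameter $\sigma_k$. Suppose Assumptions A1, A2 and A3 (described in the context) hold. If $\sigma_k\|\bar{x}^k-x^k\|\ge\epsilon$ and $$\sigma_k\ge\max_{j\in\mathcal{J}}\Big[\frac{5L_j+\overline{B}}{1-\alpha}+\frac{2n^{\frac{1-\beta_j}{2}}M_j+2M_j}{(\beta_j+1)(1-\alpha)}\epsilon^{\beta_j-1}\Big]^{\frac1{\beta_j}},$$ then for all $j\in\mathcal{J}$ $$F_j(\bar{x}^k)\le F_j(x^k)-\frac{\alpha}{2}\sigma_k\|\bar{x}^k-x^k\|^2\quad\text{and}\quad F_j(\bar{x}^k)\le F_j(x^k)-\frac{\alpha\epsilon^2}{2\sigma_k}.$$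
   Context: Setting: $m,n\ge1$, $\mathcal{J}=\{1,\dots,m\}$, $F=(F_1,\dots,F_m)$ with $F_j=f_j+h_j$, where $f_j:\mathbb{R}^n\to\mathbb{R}$ is differentiable and $h_j:\mathbb{R}^n\to\mathbb{R}\cup\{+\infty\}$ is convex. For each $j$ a map $g_{f_j}:\mathbb{R}^n\times[0,1]\to\mathbb{R}^n$ is given with $\lim_{\lambda\to0}g_{f_j}(x,\lambda)=\nabla f_j(x)$. $\|\cdot\|$ is the Euclidean norm (spectral norm for matrices). Algorithm PDFPM: choose $x^0\in\mathbb{R}^n$, $\alpha,\epsilon\in(0,1)$, $\sigma_0\ge1$, symmetric positive semidefinite $B_j^0\in\mathbb{R}^{n\times n}$; set $k=0$. Step 1: choose $0<\lambda_k\le \epsilon/(\sigma_k\sqrt n)$ and compute $g_{f_j}(x^k,\lambda_k)$ for each $j$. Step 2: let $\bar{x}^k$ be the (unique) minimizer of $\Phi_{x^k}(x)+\frac{\sigma_k}{2}\|x-x^k\|^2$, where $\Phi_{x^k}(x)=\max_{j\in\mathcal{J}}[\langle g_{f_j}(x^k,\lambda_k)+\frac12B_j^k(x-x^k),x-x^k\rangle+h_j(x)-h_j(x^k)]$. Step 3: if $\sigma_k\|\bar{x}^k-x^k\|\ge\epsilon$ go to Step 4; otherwise stop. Step 4: if $F_j(\bar{x}^k)\le F_j(x^k)-\frac{\alpha\epsilon^2}{2\sigma_k}$ for all $j\in\mathcal{J}$, set $x^{k+1}=\bar{x}^k$, $\sigma_{k+1}=\sigma_k$, choose symmetric positive semidefinite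 $B_j^{k+1}$, set $k\leftarrow k+1$ and go to Step 1; otherwise replace $\sigma_k$ by $2\sigma_k$ and go to Step 1 (same $k$). Assumption A1: there is $\overline{B}\ge0$ with $\|B_j^k\|\le\overline{B}$ for all iterations $k$ and all $j\in\mathcal{J}$. Assumption A2: for each $j$ there are $L_j,M_j>0$ and $\beta_j\in(0,1]$ with $f_j(y)\le f_j(x)+\langle\nabla f_j(x),y-x\rangle+\frac{L_j}{2}\|y-x\|^2+\frac{M_j}{\beta_j+1}\|y-x\|^{\beta_j+1}$ for all $x,y\in\mathbb{R}^n$. Assumption A3: with the same $L_j,M_j,\beta_j$, $\|\nabla f_j(x)-g_{f_j}(x,\lambda)\|\le\lambda\frac{\sqrt n L_j}{2}+\sqrt n\frac{M_j}{\beta_j+1}\lambda^{\beta_j}$ for all $x$ and all $\lambda\in(0,1]$. *)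

theory Defs
  imports "HOL-Analysis.Analysis" "HOL-Library.Extended_Real"
begin

text \<open>Convexity of an extended-real-valued function h : R^n -> R \<union> {+\<infinity>}
  (h never takes the value -\<infinity>); ereal arithmetic uses 0 * \<infinity> = 0.\<close>
definition ext_convex :: "('a::real_vector \<Rightarrow> ereal) \<Rightarrow> bool" where
  "ext_convex h \<longleftrightarrow> (\<forall>x. h x \<noteq> -\<infinity>) \<and>
     (\<forall>x y t. 0 \<le> t \<and> t \<le> 1 \<longrightarrow>
        h ((1 - t) *\<^sub>R x + t *\<^sub>R y) \<le> ereal (1 - t) * h x + ereal t * h y)"

definition sym_psd :: "real^'n^'n \<Rightarrow> bool" where
  "sym_psd B \<longleftrightarrow> transpose B = B \<and> (\<forall>v. 0 \<le> v \<bullet> (B *v v))"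

definition spec_norm :: "real^'n^'n \<Rightarrow> real" where
  "spec_norm B = onorm (\<lambda>v. B *v v)"

text \<open>The model function \<Phi>_{x^k} of Step 2, with gk j = g_{f_j}(x^k,\<lambda>_k),
  Bk j = B_j^k, index set {1..m}.\<close>
definition Phi :: "nat \<Rightarrow> (nat \<Rightarrow> real^'n) \<Rightarrow> (nat \<Rightarrow> real^'n^'n)
     \<Rightarrow> (nat \<Rightarrow> real^'n \<Rightarrow> ereal) \<Rightarrow> real^'n \<Rightarrow> real^'n \<Rightarrow> ereal" where
  "Phi m gk Bk h xk x =
     (MAX j\<in>{1..m}. ereal ((gk j + (1/2) *\<^sub>R (Bk j *v (x - xk))) \<bullet> (x - xk))
                    + h j x - h j xk)"

end

theory Submission
  imports Defs
begin

(* Write d = xbar - xk and r = norm d. Testing the minimality of xbar against x = xk, where the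
   model vanishes, and dropping the nonnegative quadratic term of B_j gives
     <g_j, d> + h_j xbar - h_j xk <= - sigma/2 r^2.
   By A2 and Cauchy-Schwarz, F_j xbar - F_j xk exceeds <g_j, d> by at most
   |grad f_j - g_j| r + L/2 r^2 + M/(beta+1) r^(beta+1). Since lambda <= eps/(sigma sqrt n) <= r/sqrt n,
   A3 turns the first term into L/2 r^2 + n^((1-beta)/2) M/(beta+1) r^(beta+1); and since
   sigma r >= eps, r^(beta+1) <= r^2 eps^(beta-1) sigma^(1-beta). The lower bound on sigma, read as
   sigma^beta >= K, makes the total at most (1-alpha)/2 sigma r^2. The second inequality follows
   from eps^2/sigma <= sigma r^2. *)

lemma mult_powr_one_minus_le_of_powr_inverse_le:
  fixes K \<beta> \<sigma> :: real
  assumes "0 < K" "0 < \<beta>" "K powr (1 / \<beta>) \<le> \<sigma>"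
  shows "K * \<sigma> powr (1 - \<beta>) \<le> \<sigma>"
proof -
  have \<sigma>: "0 < \<sigma>" using assms powr_gt_zero[of K "1 / \<beta>"] by linarith
  have "K = (K powr (1 / \<beta>)) powr \<beta>" using assms by (simp add: powr_powr)
  also have "\<dots> \<le> \<sigma> powr \<beta>" using assms by (intro powr_mono2) auto
  finally have "K * \<sigma> powr (1 - \<beta>) \<le> \<sigma> powr \<beta> * \<sigma> powr (1 - \<beta>)"
    by (intro mult_right_mono) auto
  also have "\<dots> = \<sigma>" using \<sigma> by (simp add: powr_add[symmetric])
  finally show ?thesis .
qed

lemma powr_add_one_le_of_le_mult:
  fixes r \<sigma> \<epsilon> \<beta> :: real
  assumes "0 < \<epsilon>" "0 < \<sigma>" "\<epsilon> \<le> \<sigma> * r" "\<beta> \<le> 1"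
  shows "r powr (\<beta> + 1) \<le> r\<^sup>2 * (\<epsilon> powr (\<beta> - 1) * \<sigma> powr (1 - \<beta>))"
proof -
  have r: "0 < r" using assms zero_less_mult_pos[of \<sigma> r] by linarith
  have "r powr (\<beta> + 1) = r powr 2 * r powr (\<beta> - 1)"
    by (simp add: powr_add[symmetric] add.commute)
  also have "r powr 2 = r\<^sup>2"
    using r by simp
  also have "r\<^sup>2 * r powr (\<beta> - 1) \<le> r\<^sup>2 * (\<epsilon> / \<sigma>) powr (\<beta> - 1)"
    using assms by (intro mult_left_mono powr_mono2') (auto simp: field_simps)
  also have "(\<epsilon> / \<sigma>) powr (\<beta> - 1) = \<epsilon> powr (\<beta> - 1) * \<sigma> powr (1 - \<beta>)"
    using assms by (simp add: powr_divide powr_minus_divide[of \<sigma> "\<beta> - 1", simplified])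
  finally show ?thesis .
qed

lemma gradient_error_mult_le:
  fixes N L M \<beta> lam r E :: real
  assumes "1 \<le> N" "0 \<le> L" "0 \<le> M" "0 \<le> \<beta>" "0 < lam" "lam * sqrt N \<le> r"
    and E: "E \<le> lam * (sqrt N * L / 2) + sqrt N * (M / (\<beta> + 1)) * lam powr \<beta>"
  shows "E * r \<le> L / 2 * r\<^sup>2 + N powr ((1 - \<beta>) / 2) * M / (\<beta> + 1) * r powr (\<beta> + 1)"
proof -
  have sqrtN: "0 < sqrt N" using assms by simp
  have r: "0 < r" using assms sqrtN mult_pos_pos[of lam "sqrt N"] by linarith
  have "lam * sqrt N * r \<le> r * r"
    using assms r by (intro mult_right_mono) auto
  then have "L / 2 * (lam * sqrt N * r) \<le> L / 2 * (r * r)"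
    using assms by (intro mult_left_mono) auto
  then have linear: "lam * (sqrt N * L / 2) * r \<le> L / 2 * r\<^sup>2"
    by (simp add: power2_eq_square mult_ac)
  have "lam \<le> r / sqrt N"
    using assms sqrtN by (simp add: pos_le_divide_eq)
  then have "lam powr \<beta> \<le> (r / sqrt N) powr \<beta>"
    using assms by (intro powr_mono2) auto
  also have "(r / sqrt N) powr \<beta> = r powr \<beta> / N powr (\<beta> / 2)"
    using assms r by (simp add: powr_divide powr_half_sqrt[symmetric] powr_powr)
  finally have "sqrt N * (M / (\<beta> + 1)) * lam powr \<beta> * r
      \<le> sqrt N * (M / (\<beta> + 1)) * (r powr \<beta> / N powr (\<beta> / 2)) * r"
    using assms r by (intro mult_right_mono mult_left_mono) auto
  also have "\<dots> = sqrt N / N powr (\<beta> / 2) * M / (\<beta> + 1) * (r powr \<beta> * r)"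
    by (simp add: mult_ac)
  also have "sqrt N / N powr (\<beta> / 2) = N powr ((1 - \<beta>) / 2)"
    using assms by (simp add: powr_half_sqrt[symmetric] powr_diff[symmetric] diff_divide_distrib)
  also have "r powr \<beta> * r = r powr (\<beta> + 1)"
    using r by (simp add: powr_add)
  finally have hoelder: "sqrt N * (M / (\<beta> + 1)) * lam powr \<beta> * r
      \<le> N powr ((1 - \<beta>) / 2) * M / (\<beta> + 1) * r powr (\<beta> + 1)" .
  have "E * r \<le> (lam * (sqrt N * L / 2) + sqrt N * (M / (\<beta> + 1)) * lam powr \<beta>) * r"
    using E r by (intro mult_right_mono) auto
  then show ?thesis
    using linear hoelder by (simp add: algebra_simps)
qed

lemma step_size_threshold:
  fixes \<sigma> \<epsilon> \<beta> L B C \<alpha> :: real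
  assumes "1 \<le> \<sigma>" "0 < \<beta>" "\<beta> \<le> 1" "0 \<le> L" "0 \<le> B" "\<alpha> < 1"
    and "0 < 5 * L + B + 2 * C * \<epsilon> powr (\<beta> - 1)"
    and "((5 * L + B + 2 * C * \<epsilon> powr (\<beta> - 1)) / (1 - \<alpha>)) powr (1 / \<beta>) \<le> \<sigma>"
  shows "2 * L + 2 * C * (\<epsilon> powr (\<beta> - 1) * \<sigma> powr (1 - \<beta>)) \<le> (1 - \<alpha>) * \<sigma>"
proof -
  define A where "A = 5 * L + B + 2 * C * \<epsilon> powr (\<beta> - 1)"
  have "A / (1 - \<alpha>) * \<sigma> powr (1 - \<beta>) \<le> \<sigma>"
    using assms by (intro mult_powr_one_minus_le_of_powr_inverse_le) (auto simp: A_def)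
  then have "A * \<sigma> powr (1 - \<beta>) \<le> (1 - \<alpha>) * \<sigma>"
    using assms by (simp add: field_simps)
  moreover have "5 * L + B \<le> (5 * L + B) * \<sigma> powr (1 - \<beta>)"
    using assms mult_left_mono[of 1 "\<sigma> powr (1 - \<beta>)" "5 * L + B"]
    by (simp add: ge_one_powr_ge_zero)
  ultimately show ?thesis
    unfolding A_def using assms by (simp add: algebra_simps)
qed

lemma inexact_model_error_le:
  fixes r \<sigma> \<epsilon> \<beta> L M \<alpha> B N lam E :: real
  assumes "0 < \<epsilon>" "1 \<le> \<sigma>" "\<epsilon> \<le> \<sigma> * r" "0 < \<beta>" "\<beta> \<le> 1" "0 \<le> L" "0 < M"
    and "\<alpha> < 1" "0 \<le> B" "1 \<le> N" "0 < lam" "lam \<le> \<epsilon> / (\<sigma> * sqrt N)"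
    and E: "E \<le> lam * (sqrt N * L / 2) + sqrt N * (M / (\<beta> + 1)) * lam powr \<beta>"
    and \<sigma>_large: "((5 * L + B) / (1 - \<alpha>)
        + (2 * N powr ((1 - \<beta>) / 2) * M + 2 * M) / ((\<beta> + 1) * (1 - \<alpha>)) * \<epsilon> powr (\<beta> - 1))
          powr (1 / \<beta>) \<le> \<sigma>"
  shows "E * r + L / 2 * r\<^sup>2 + M / (\<beta> + 1) * r powr (\<beta> + 1) \<le> (1 - \<alpha>) / 2 * \<sigma> * r\<^sup>2"
proof -
  define C where "C = (N powr ((1 - \<beta>) / 2) + 1) * M / (\<beta> + 1)"
  define P where "P = \<epsilon> powr (\<beta> - 1) * \<sigma> powr (1 - \<beta>)"
  have "0 < C"
    unfolding C_def using assms by (intro divide_pos_pos mult_pos_pos add_nonneg_pos) auto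
  have "1 - \<alpha> \<noteq> 0" "\<beta> + 1 \<noteq> 0"
    using assms by auto
  then have "(2 * N powr ((1 - \<beta>) / 2) * M + 2 * M) / ((\<beta> + 1) * (1 - \<alpha>)) = 2 * C / (1 - \<alpha>)"
    unfolding C_def by (simp add: divide_divide_eq_left[symmetric] add_divide_distrib algebra_simps)
  then have "(5 * L + B) / (1 - \<alpha>)
        + (2 * N powr ((1 - \<beta>) / 2) * M + 2 * M) / ((\<beta> + 1) * (1 - \<alpha>)) * \<epsilon> powr (\<beta> - 1)
      = (5 * L + B + 2 * C * \<epsilon> powr (\<beta> - 1)) / (1 - \<alpha>)"
    by (simp add: add_divide_distrib)
  then have threshold: "2 * L + 2 * C * P \<le> (1 - \<alpha>) * \<sigma>"
    unfolding P_def using assms \<open>0 < C\<close> \<sigma>_large by (intro step_size_threshold) (auto intro!: add_nonneg_pos)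
  have "\<sigma> * (lam * sqrt N) \<le> \<epsilon>"
    using assms by (simp add: pos_le_divide_eq mult_ac)
  then have "\<sigma> * (lam * sqrt N) \<le> \<sigma> * r"
    using assms by linarith
  then have "lam * sqrt N \<le> r"
    using assms by (simp add: mult_le_cancel_left_pos)
  then have "E * r \<le> L / 2 * r\<^sup>2 + N powr ((1 - \<beta>) / 2) * M / (\<beta> + 1) * r powr (\<beta> + 1)"
    using assms by (intro gradient_error_mult_le) auto
  then have "E * r + L / 2 * r\<^sup>2 + M / (\<beta> + 1) * r powr (\<beta> + 1) \<le> L * r\<^sup>2 + C * r powr (\<beta> + 1)"
    by (simp add: C_def algebra_simps add_divide_distrib)
  also have "\<dots> \<le> L * r\<^sup>2 + C * (r\<^sup>2 * P)"
    using \<open>0 < C\<close> assms powr_add_one_le_of_le_mult[of \<epsilon> \<sigma> r \<beta>]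
    by (intro add_left_mono mult_left_mono) (auto simp: P_def)
  also have "\<dots> = r\<^sup>2 * (2 * L + 2 * C * P) / 2"
    by (simp add: algebra_simps)
  also have "\<dots> \<le> r\<^sup>2 * ((1 - \<alpha>) * \<sigma>) / 2"
    using threshold by (intro divide_right_mono mult_left_mono) auto
  finally show ?thesis
    by (simp add: mult_ac)
qed

lemma sufficient_decrease_of_model_decrease:
  fixes G gk d :: "'a::real_inner"
  assumes descent: "fy \<le> fx + G \<bullet> d + L / 2 * (norm d)\<^sup>2 + M / (\<beta> + 1) * norm d powr (\<beta> + 1)"
    and model: "gk \<bullet> d + \<sigma> / 2 * (norm d)\<^sup>2 + hy \<le> hx"
    and error: "norm (G - gk) * norm d + L / 2 * (norm d)\<^sup>2 + M / (\<beta> + 1) * norm d powr (\<beta> + 1)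
      \<le> (1 - \<alpha>) / 2 * \<sigma> * (norm d)\<^sup>2"
  shows "fy + hy \<le> fx - \<alpha> / 2 * \<sigma> * (norm d)\<^sup>2 + hx"
proof -
  have "G \<bullet> d \<le> gk \<bullet> d + norm (G - gk) * norm d"
    using norm_cauchy_schwarz[of "G - gk" d] by (simp add: inner_diff_left)
  moreover have "(1 - \<alpha>) / 2 * \<sigma> * (norm d)\<^sup>2 = \<sigma> / 2 * (norm d)\<^sup>2 - \<alpha> / 2 * \<sigma> * (norm d)\<^sup>2"
    by (simp add: field_simps)
  ultimately show ?thesis
    using assms by linarith
qed

lemma sq_div_le_of_le_mult:
  fixes \<epsilon> \<sigma> r :: real
  assumes "0 \<le> \<epsilon>" "\<epsilon> \<le> \<sigma> * r" "0 < \<sigma>"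
  shows "\<epsilon>\<^sup>2 / \<sigma> \<le> \<sigma> * r\<^sup>2"
proof -
  have "\<epsilon>\<^sup>2 \<le> (\<sigma> * r)\<^sup>2"
    using assms by (intro power_mono) auto
  then show ?thesis
    using assms by (simp add: pos_divide_le_eq power2_eq_square mult_ac)
qed

lemma Phi_center:
  assumes "1 \<le> m" "\<And>j. j \<in> {1..m} \<Longrightarrow> \<bar>h j xk\<bar> \<noteq> \<infinity>"
  shows "Phi m gk Bk h xk xk = 0"
proof -
  have "ereal ((gk j + (1/2) *\<^sub>R (Bk j *v (xk - xk))) \<bullet> (xk - xk)) + h j xk - h j xk = 0"
    if "j \<in> {1..m}" for j
    using assms(2)[OF that] by (cases "h j xk") auto
  then have "(\<lambda>j. ereal ((gk j + (1/2) *\<^sub>R (Bk j *v (xk - xk))) \<bullet> (xk - xk)) + h j xk - h j xk)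
      ` {1..m} = {0}"
    using assms(1) by force
  then show ?thesis
    by (simp add: Phi_def)
qed

lemma Phi_ge_component:
  assumes "j \<in> {1..m}"
  shows "ereal ((gk j + (1/2) *\<^sub>R (Bk j *v (x - xk))) \<bullet> (x - xk)) + h j x - h j xk
    \<le> Phi m gk Bk h xk x"
  unfolding Phi_def using assms by (intro Max_ge) auto

lemma prox_step_component_decrease:
  fixes xk xbar :: "real^'n"
  assumes j: "j \<in> {1..m}"
    and h_xk: "\<And>i. i \<in> {1..m} \<Longrightarrow> \<bar>h i xk\<bar> \<noteq> \<infinity>" and h_xbar: "h j xbar \<noteq> -\<infinity>"
    and psd: "sym_psd (Bk j)"
    and xbar_min: "\<And>x. Phi m gk Bk h xk xbar + ereal (\<sigma> / 2 * (norm (xbar - xk))\<^sup>2)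
                       \<le> Phi m gk Bk h xk x + ereal (\<sigma> / 2 * (norm (x - xk))\<^sup>2)"
  shows "ereal (gk j \<bullet> (xbar - xk) + \<sigma> / 2 * (norm (xbar - xk))\<^sup>2) + h j xbar \<le> h j xk"
proof -
  define d where "d = xbar - xk"
  have "Phi m gk Bk h xk xbar + ereal (\<sigma> / 2 * (norm d)\<^sup>2) \<le> 0"
    using xbar_min[of xk] Phi_center[of m h xk gk Bk] j h_xk by (simp add: d_def)
  then have model: "ereal ((gk j + (1/2) *\<^sub>R (Bk j *v d)) \<bullet> d) + h j xbar - h j xk
      + ereal (\<sigma> / 2 * (norm d)\<^sup>2) \<le> 0"
    using Phi_ge_component[OF j, of gk Bk xbar xk h] unfolding d_def
    by (meson add_right_mono order_trans)
  have "0 \<le> d \<bullet> (Bk j *v d)"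
    using psd by (simp add: sym_psd_def)
  then have "gk j \<bullet> d \<le> (gk j + (1/2) *\<^sub>R (Bk j *v d)) \<bullet> d"
    by (simp add: inner_add_left inner_commute[of "Bk j *v d" d])
  moreover obtain hk where "h j xk = ereal hk"
    using h_xk[OF j] by (cases "h j xk") auto
  ultimately show ?thesis
    using model h_xbar unfolding d_def[symmetric] by (cases "h j xbar") auto
qed

theorem theorem1:
  fixes m :: nat
    and f :: "nat \<Rightarrow> real^'n \<Rightarrow> real"
    and gradf :: "nat \<Rightarrow> real^'n \<Rightarrow> real^'n"
    and h :: "nat \<Rightarrow> real^'n \<Rightarrow> ereal"
    and g :: "nat \<Rightarrow> real^'n \<Rightarrow> real \<Rightarrow> real^'n"
    and L M \<beta> :: "nat \<Rightarrow> real"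
    and Bk :: "nat \<Rightarrow> real^'n^'n"
    and Bbar \<alpha> \<epsilon> \<sigma> lam :: real
    and xk xbar :: "real^'n"
  assumes m: "m \<ge> 1"
    and grad: "\<And>j x. j \<in> {1..m} \<Longrightarrow> (f j has_derivative (\<lambda>v. gradf j x \<bullet> v)) (at x)"
    and hconv: "\<And>j. j \<in> {1..m} \<Longrightarrow> ext_convex (h j)"
    and glim: "\<And>j x. j \<in> {1..m} \<Longrightarrow> ((g j x) \<longlongrightarrow> gradf j x) (at 0 within {0..1})"
    and alpha: "0 < \<alpha>" "\<alpha> < 1"
    and eps: "0 < \<epsilon>" "\<epsilon> < 1"
    and sigma: "\<sigma> \<ge> 1"
    and lambda: "0 < lam" "lam \<le> \<epsilon> / (\<sigma> * sqrt (real CARD('n)))"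
    and Bpsd: "\<And>j. j \<in> {1..m} \<Longrightarrow> sym_psd (Bk j)"
    and xk_dom: "\<And>j. j \<in> {1..m} \<Longrightarrow> h j xk < \<infinity>"
    and xbar_min: "\<And>x. Phi m (\<lambda>j. g j xk lam) Bk h xk xbar + ereal (\<sigma> / 2 * (norm (xbar - xk))\<^sup>2)
                       \<le> Phi m (\<lambda>j. g j xk lam) Bk h xk x + ereal (\<sigma> / 2 * (norm (x - xk))\<^sup>2)"
    and A1: "Bbar \<ge> 0" "\<And>j. j \<in> {1..m} \<Longrightarrow> spec_norm (Bk j) \<le> Bbar"
    and par: "\<And>j. j \<in> {1..m} \<Longrightarrow> L j > 0 \<and> M j > 0 \<and> 0 < \<beta> j \<and> \<beta> j \<le> 1"
    and A2: "\<And>j x y. j \<in> {1..m} \<Longrightarrow>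
               f j y \<le> f j x + gradf j x \<bullet> (y - x) + L j / 2 * (norm (y - x))\<^sup>2
                        + M j / (\<beta> j + 1) * norm (y - x) powr (\<beta> j + 1)"
    and A3: "\<And>j x l. j \<in> {1..m} \<Longrightarrow> 0 < l \<Longrightarrow> l \<le> 1 \<Longrightarrow>
               norm (gradf j x - g j x l)
                 \<le> l * (sqrt (real CARD('n)) * L j / 2)
                   + sqrt (real CARD('n)) * (M j / (\<beta> j + 1)) * l powr (\<beta> j)"
    and step3: "\<sigma> * norm (xbar - xk) \<ge> \<epsilon>"
    and sigma_big: "\<sigma> \<ge> (MAX j\<in>{1..m}.
               ((5 * L j + Bbar) / (1 - \<alpha>)
                + (2 * real CARD('n) powr ((1 - \<beta> j) / 2) * M j + 2 * M j)
                  / ((\<beta> j + 1) * (1 - \<alpha>)) * \<epsilon> powr (\<beta> j - 1)) powr (1 / \<beta> j))"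
  shows "\<forall>j\<in>{1..m}.
           ereal (f j xbar) + h j xbar
             \<le> ereal (f j xk - \<alpha> / 2 * \<sigma> * (norm (xbar - xk))\<^sup>2) + h j xk
         \<and> ereal (f j xbar) + h j xbar
             \<le> ereal (f j xk - \<alpha> * \<epsilon>\<^sup>2 / (2 * \<sigma>)) + h j xk"
proof
  fix j assume j: "j \<in> {1..m}"
  define d where "d = xbar - xk"
  have h_not_MInf: "\<And>i x. i \<in> {1..m} \<Longrightarrow> h i x \<noteq> -\<infinity>"
    using hconv by (simp add: ext_convex_def)
  have h_xk: "\<bar>h i xk\<bar> \<noteq> \<infinity>" if "i \<in> {1..m}" for i
    using xk_dom[OF that] h_not_MInf[OF that, of xk] by (cases "h i xk") auto
  have "ereal (g j xk lam \<bullet> d + \<sigma> / 2 * (norm d)\<^sup>2) + h j xbar \<le> h j xk"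
    unfolding d_def using prox_step_component_decrease[OF j h_xk h_not_MInf[OF j] Bpsd[OF j] xbar_min] .
  then obtain hk hb where hk: "h j xk = ereal hk" and hb: "h j xbar = ereal hb"
    and prox_decrease: "g j xk lam \<bullet> d + \<sigma> / 2 * (norm d)\<^sup>2 + hb \<le> hk"
    using h_xk[OF j] h_not_MInf[OF j] by (cases "h j xk"; cases "h j xbar") auto
  have "\<epsilon> / (\<sigma> * sqrt (real CARD('n))) \<le> \<epsilon> / (1 * 1)"
    using eps sigma by (intro divide_left_mono mult_mono) auto
  then have "lam \<le> 1"
    using lambda eps by simp
  moreover have "\<sigma> \<ge> ((5 * L j + Bbar) / (1 - \<alpha>)
      + (2 * real CARD('n) powr ((1 - \<beta> j) / 2) * M j + 2 * M j) / ((\<beta> j + 1) * (1 - \<alpha>))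
        * \<epsilon> powr (\<beta> j - 1)) powr (1 / \<beta> j)"
    using sigma_big j by (auto intro: order_trans[OF Max_ge])
  ultimately have "norm (gradf j xk - g j xk lam) * norm d + L j / 2 * (norm d)\<^sup>2
      + M j / (\<beta> j + 1) * norm d powr (\<beta> j + 1) \<le> (1 - \<alpha>) / 2 * \<sigma> * (norm d)\<^sup>2"
    using par[OF j] alpha eps sigma lambda A1(1) step3 A3[OF j lambda(1)] unfolding d_def
    by (intro inexact_model_error_le) auto
  then have "f j xbar + hb \<le> f j xk - \<alpha> / 2 * \<sigma> * (norm d)\<^sup>2 + hk"
    using A2[OF j, where x = xk and y = xbar] prox_decrease unfolding d_def[symmetric]
    by (rule sufficient_decrease_of_model_decrease[rotated 2])
  moreover have "\<alpha> * (\<epsilon>\<^sup>2 / \<sigma>) \<le> \<alpha> * (\<sigma> * (norm d)\<^sup>2)"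
    using alpha eps sigma step3 by (intro mult_left_mono sq_div_le_of_le_mult) (auto simp: d_def)
  ultimately show "ereal (f j xbar) + h j xbar
      \<le> ereal (f j xk - \<alpha> / 2 * \<sigma> * (norm (xbar - xk))\<^sup>2) + h j xk
    \<and> ereal (f j xbar) + h j xbar \<le> ereal (f j xk - \<alpha> * \<epsilon>\<^sup>2 / (2 * \<sigma>)) + h j xk"
    using hk hb unfolding d_def by (simp add: algebra_simps)
qed

end
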